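(* Let $\Gamma$ be a finite bipartite graph with $|V(\Gamma)|\geq 4$. The following are equivalent: (1) $P_5\not\leq\Gamma$ and $\Gamma$ is prime; (2) $\Gamma$ is critical; (3) $\Gamma$ is a half graph.
   Context: $P_5$ is the path on 5 vertices; $G\leq H$ means $G$ is isomorphic to an induced subgraph of $H$. A module of a graph is a set $M$ of vertices such that every vertex outside $M$ is adjacent to all or none of $M$; $\emptyset$, $V(\Gamma)$ and singletons are trivial; $\Gamma$ is prime if $|V(\Gamma)|\geq3$ and all modules are trivial; a prime graph is critical if $\Gamma-v$ is not prime for every vertex $v$. A bipartite graph with bipartition $\{X,Y\}$ is a half graph if there exist a linear order $L$ on $X$ and a bijection $\varphi:X\to Y$ with $E(\Gamma)=\{\{x,\varphi(x')\}: x\leq x'\bmod L\}$. *)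

theory Defs
  imports Main
begin

text \<open>A finite simple graph is given by a vertex set V and an adjacency relation E
  (only its restriction to V matters).\<close>

definition graph :: "'a set \<Rightarrow> ('a \<Rightarrow> 'a \<Rightarrow> bool) \<Rightarrow> bool" where
  "graph V E \<longleftrightarrow> finite V \<and> (\<forall>x\<in>V. \<forall>y\<in>V. E x y \<longleftrightarrow> E y x) \<and> (\<forall>x\<in>V. \<not> E x x)"

definition bipartition :: "'a set \<Rightarrow> ('a \<Rightarrow> 'a \<Rightarrow> bool) \<Rightarrow> 'a set \<Rightarrow> 'a set \<Rightarrow> bool" where
  "bipartition V E X Y \<longleftrightarrow> X \<union> Y = V \<and> X \<inter> Y = {} \<and>
     (\<forall>x\<in>V. \<forall>y\<in>V. E x y \<longrightarrow> (x \<in> X \<longleftrightarrow> y \<in> Y))"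

definition bipartite :: "'a set \<Rightarrow> ('a \<Rightarrow> 'a \<Rightarrow> bool) \<Rightarrow> bool" where
  "bipartite V E \<longleftrightarrow> (\<exists>X Y. bipartition V E X Y)"

definition is_module :: "'a set \<Rightarrow> ('a \<Rightarrow> 'a \<Rightarrow> bool) \<Rightarrow> 'a set \<Rightarrow> bool" where
  "is_module V E M \<longleftrightarrow> M \<subseteq> V \<and>
     (\<forall>v \<in> V - M. (\<forall>m\<in>M. E v m) \<or> (\<forall>m\<in>M. \<not> E v m))"

definition trivial_module :: "'a set \<Rightarrow> 'a set \<Rightarrow> bool" where
  "trivial_module V M \<longleftrightarrow> M = {} \<or> M = V \<or> card M = 1"

definition prime_graph :: "'a set \<Rightarrow> ('a \<Rightarrow> 'a \<Rightarrow> bool) \<Rightarrow> bool" where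
  "prime_graph V E \<longleftrightarrow> card V \<ge> 3 \<and> (\<forall>M. is_module V E M \<longrightarrow> trivial_module V M)"

definition critical :: "'a set \<Rightarrow> ('a \<Rightarrow> 'a \<Rightarrow> bool) \<Rightarrow> bool" where
  "critical V E \<longleftrightarrow> prime_graph V E \<and> (\<forall>v\<in>V. \<not> prime_graph (V - {v}) E)"

definition induced_le ::
  "'b set \<Rightarrow> ('b \<Rightarrow> 'b \<Rightarrow> bool) \<Rightarrow> 'a set \<Rightarrow> ('a \<Rightarrow> 'a \<Rightarrow> bool) \<Rightarrow> bool" where
  "induced_le W F V E \<longleftrightarrow> (\<exists>f. inj_on f W \<and> f ` W \<subseteq> V \<and>
       (\<forall>x\<in>W. \<forall>y\<in>W. F x y \<longleftrightarrow> E (f x) (f y)))"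

definition P5_V :: "nat set" where "P5_V = {0..<5}"
definition P5_E :: "nat \<Rightarrow> nat \<Rightarrow> bool" where "P5_E i j \<longleftrightarrow> i = j + 1 \<or> j = i + 1"

definition half_graph :: "'a set \<Rightarrow> ('a \<Rightarrow> 'a \<Rightarrow> bool) \<Rightarrow> bool" where
  "half_graph V E \<longleftrightarrow> (\<exists>X Y L \<phi>.
     X \<union> Y = V \<and> X \<inter> Y = {} \<and>
     linear_order_on X L \<and> bij_betw \<phi> X Y \<and>
     (\<forall>u\<in>V. \<forall>w\<in>V. E u w \<longleftrightarrow>
        (\<exists>x\<in>X. \<exists>x'\<in>X. (x, x') \<in> L \<and>
            ((u = x \<and> w = \<phi> x') \<or> (w = x \<and> u = \<phi> x')))))"

end

theory Submission
  imports Defs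
begin

text \<open>
  For a bipartite graph on at least three vertices, being prime amounts to being connected and
  twin-free (no two vertices are adjacent to the same vertices outside the pair).

  If the graph is prime and P5-free, the neighbourhoods of the vertices of one side X form a
  chain: a vertex a of X with maximal neighbourhood is adjacent to the whole other side, so two
  vertices of X with incomparable neighbourhoods would span an induced P5 through a.  Ordering X
  by reverse inclusion of neighbourhoods and matching x' with the vertex of Y whose neighbourhood
  is the up-set of x' exhibits the graph as a half graph.

  Deleting a vertex from a half graph creates twins or an isolated vertex, so half graphs are
  critical.  Conversely a critical graph contains no induced P5: P5 is prime and stays prime
  after deleting an endpoint, and since a prime induced subgraph of a prime graph can be enlarged
  two vertices at a time inside it (a bipartite version of the Schmerl-Trotter lemma), every prime
  graph containing such a subgraph has a vertex whose deletion leaves it prime.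
\<close>

definition distinguished :: "('a \<Rightarrow> 'a \<Rightarrow> bool) \<Rightarrow> 'a set \<Rightarrow> 'a \<Rightarrow> 'a \<Rightarrow> bool" where
  "distinguished E S a b \<longleftrightarrow> (\<exists>w\<in>S - {a, b}. E w a \<noteq> E w b)"

definition twin_free :: "('a \<Rightarrow> 'a \<Rightarrow> bool) \<Rightarrow> 'a set \<Rightarrow> bool" where
  "twin_free E S \<longleftrightarrow> (\<forall>a\<in>S. \<forall>b\<in>S. a \<noteq> b \<longrightarrow> distinguished E S a b)"

definition connected_on :: "('a \<Rightarrow> 'a \<Rightarrow> bool) \<Rightarrow> 'a set \<Rightarrow> bool" where
  "connected_on E S \<longleftrightarrow> (\<forall>A \<subseteq> S. A \<noteq> {} \<longrightarrow> A \<noteq> S \<longrightarrow> (\<exists>a\<in>A. \<exists>b\<in>S - A. E a b))"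

definition mimics :: "('a \<Rightarrow> 'a \<Rightarrow> bool) \<Rightarrow> 'a set \<Rightarrow> 'a \<Rightarrow> 'a \<Rightarrow> bool" where
  "mimics E S u s \<longleftrightarrow> (\<forall>w\<in>S - {s}. E w u = E w s)"

lemma connected_onD:
  "connected_on E S \<Longrightarrow> A \<subseteq> S \<Longrightarrow> A \<noteq> {} \<Longrightarrow> A \<noteq> S \<Longrightarrow> \<exists>a\<in>A. \<exists>b\<in>S - A. E a b"
  unfolding connected_on_def by blast

lemma distinguishedI: "w \<in> S \<Longrightarrow> w \<noteq> a \<Longrightarrow> w \<noteq> b \<Longrightarrow> E w a \<noteq> E w b \<Longrightarrow> distinguished E S a b"
  unfolding distinguished_def by blast

lemma distinguished_sym: "distinguished E S a b \<longleftrightarrow> distinguished E S b a"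
  unfolding distinguished_def by (auto simp: insert_commute)

lemma distinguished_mono: "distinguished E S a b \<Longrightarrow> S \<subseteq> T \<Longrightarrow> distinguished E T a b"
  unfolding distinguished_def by blast

lemma not_mimics_imp_distinguished:
  assumes "\<not> mimics E S u s" "u \<notin> S" "S \<subseteq> T"
  shows "distinguished E T u s"
  using assms unfolding mimics_def distinguished_def by blast

lemma twin_free_extend:
  assumes S: "twin_free E S" "S \<subseteq> T"
    and new: "\<And>a b. a \<in> T - S \<Longrightarrow> b \<in> T \<Longrightarrow> a \<noteq> b \<Longrightarrow> distinguished E T a b"
  shows "twin_free E T"
  unfolding twin_free_def
proof (intro ballI impI)
  fix a b assume ab: "a \<in> T" "b \<in> T" "a \<noteq> b"
  consider "a \<in> S" "b \<in> S" | "a \<notin> S" | "b \<notin> S"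
    by blast
  then show "distinguished E T a b"
  proof cases
    case 1
    then have "distinguished E S a b"
      using S(1) ab(3) unfolding twin_free_def by blast
    then show ?thesis
      using S(2) by (rule distinguished_mono)
  next
    case 2
    then show ?thesis
      using new ab by blast
  next
    case 3
    then have "distinguished E T b a"
      using new ab by blast
    then show ?thesis
      by (simp add: distinguished_sym)
  qed
qed

lemma twin_free_insert2:
  assumes "twin_free E S" "u \<notin> S" "z \<notin> S" "u \<noteq> z"
    and "\<forall>s\<in>S. \<not> mimics E S u s" "\<forall>s\<in>S. \<not> mimics E S z s"
    and "w \<in> S" "E w u \<noteq> E w z"
  shows "twin_free E (insert u (insert z S))"
proof (rule twin_free_extend[OF assms(1)])
  fix a b assume ab: "a \<in> insert u (insert z S) - S" "b \<in> insert u (insert z S)" "a \<noteq> b"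
  have "distinguished E (insert u (insert z S)) u z"
    using assms by (intro distinguishedI[of w]) auto
  moreover have "distinguished E (insert u (insert z S)) p s"
    if "p \<in> {u, z}" "s \<in> S" for p s
    using that assms not_mimics_imp_distinguished[of E S p s "insert u (insert z S)"] by auto
  ultimately show "distinguished E (insert u (insert z S)) a b"
    using ab distinguished_sym[of E _ a b] by blast
qed auto

lemma twins_not_prime:
  assumes "a \<in> S" "b \<in> S" "a \<noteq> b" "card S \<ge> 3" "\<forall>w\<in>S - {a, b}. E w a = E w b"
  shows "\<not> prime_graph S E"
proof
  assume "prime_graph S E"
  moreover have "is_module S E {a, b}"
    using assms unfolding is_module_def by auto
  ultimately have "trivial_module S {a, b}"
    unfolding prime_graph_def by blast
  then show False
    using assms by (auto simp: trivial_module_def)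
qed

lemma isolated_not_prime:
  assumes "u \<in> S" "finite S" "card S \<ge> 3" "\<forall>w\<in>S. \<not> E u w"
  shows "\<not> prime_graph S E"
proof
  assume "prime_graph S E"
  moreover have "is_module S E (S - {u})"
    using assms unfolding is_module_def by auto
  ultimately have "trivial_module S (S - {u})"
    unfolding prime_graph_def by blast
  moreover have "card (S - {u}) \<ge> 2"
    using assms by simp
  ultimately show False
    using assms(1) by (auto simp: trivial_module_def subset_singleton_iff)
qed

lemma prime_imp_twin_free:
  assumes "prime_graph S E"
  shows "twin_free E S"
  using assms twins_not_prime[of _ S _ E]
  unfolding twin_free_def distinguished_def prime_graph_def by blast

lemma prime_graph_embedding:
  assumes "inj_on f W" "\<forall>x\<in>W. \<forall>y\<in>W. F x y \<longleftrightarrow> E (f x) (f y)" "prime_graph W F"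
  shows "prime_graph (f ` W) E"
  unfolding prime_graph_def
proof (intro conjI allI impI)
  show "card (f ` W) \<ge> 3"
    using assms(1,3) by (simp add: card_image prime_graph_def)
  fix M assume M: "is_module (f ` W) E M"
  define N where "N = W \<inter> f -` M"
  have M_eq: "M = f ` N"
    using M unfolding N_def is_module_def by auto
  have "is_module W F N"
    using M assms(1,2) unfolding is_module_def N_def by (auto simp: inj_on_eq_iff)
  then have "trivial_module W N"
    using assms(3) unfolding prime_graph_def by blast
  moreover have "inj_on f N"
    using assms(1) inj_on_subset unfolding N_def by blast
  moreover have "N \<subseteq> W"
    unfolding N_def by blast
  ultimately show "trivial_module (f ` W) M"
    using M_eq by (auto simp: trivial_module_def card_image)
qed

lemma prime_graph_iff_Pow:
  "prime_graph S E \<longleftrightarrow> card S \<ge> 3 \<and> (\<forall>M\<in>Pow S. is_module S E M \<longrightarrow> trivial_module S M)"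
  unfolding prime_graph_def is_module_def by blast

lemma prime_P5: "prime_graph P5_V P5_E"
  unfolding prime_graph_iff_Pow is_module_def trivial_module_def P5_V_def P5_E_def by code_simp

lemma prime_P5_minus_endpoint: "prime_graph (P5_V - {0}) P5_E"
  unfolding prime_graph_iff_Pow is_module_def trivial_module_def P5_V_def P5_E_def by code_simp

lemma linear_order_on_finite_has_greatest:
  assumes "linear_order_on X L" "finite A" "A \<noteq> {}" "A \<subseteq> X"
  shows "\<exists>p\<in>A. \<forall>w\<in>A. (w, p) \<in> L"
  using assms(2-4)
proof (induction A rule: finite_ne_induct)
  case (singleton x)
  then show ?case
    using assms(1) by (auto simp: order_on_defs refl_on_def)
next
  case (insert a A)
  then obtain p where p: "p \<in> A" "\<forall>w\<in>A. (w, p) \<in> L"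
    by auto
  have "a \<in> X" "p \<in> X"
    using insert.prems p(1) by auto
  have lin: "trans L" "total_on X L" "refl_on X L"
    using assms(1) by (auto simp: order_on_defs)
  have "(p, a) \<in> L \<or> (a, p) \<in> L"
    using lin(2,3) \<open>a \<in> X\<close> \<open>p \<in> X\<close> unfolding total_on_def refl_on_def by (cases "p = a") auto
  then show ?case
  proof
    assume "(p, a) \<in> L"
    then have "\<forall>w\<in>insert a A. (w, a) \<in> L"
      using p lin \<open>a \<in> X\<close> unfolding refl_on_def by (blast dest: transD)
    then show ?thesis
      by blast
  next
    assume "(a, p) \<in> L"
    then show ?thesis
      using p by blast
  qed
qed

lemma linear_order_on_finite_has_least:
  assumes "linear_order_on X L" "finite A" "A \<noteq> {}" "A \<subseteq> X"
  shows "\<exists>p\<in>A. \<forall>w\<in>A. (p, w) \<in> L"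
  using linear_order_on_finite_has_greatest[of X "L\<inverse>" A] assms by simp

locale simple_graph =
  fixes V :: "'a set" and E :: "'a \<Rightarrow> 'a \<Rightarrow> bool"
  assumes graph: "graph V E"
begin

lemma finite_V: "finite V"
  using graph unfolding graph_def by blast

lemma adj_sym: "a \<in> V \<Longrightarrow> b \<in> V \<Longrightarrow> E a b \<longleftrightarrow> E b a"
  using graph unfolding graph_def by blast

lemma adj_irrefl: "a \<in> V \<Longrightarrow> \<not> E a a"
  using graph unfolding graph_def by blast

lemma prime_imp_connected_on:
  assumes "S \<subseteq> V" "prime_graph S E"
  shows "connected_on E S"
  unfolding connected_on_def
proof (intro allI impI)
  fix A assume A: "A \<subseteq> S" "A \<noteq> {}" "A \<noteq> S"
  show "\<exists>a\<in>A. \<exists>b\<in>S - A. E a b"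
  proof (rule ccontr)
    assume "\<not> ?thesis"
    then have no_edge: "\<not> E a b" "\<not> E b a" if "a \<in> A" "b \<in> S - A" for a b
      using that A(1) assms(1) adj_sym[of a b] by blast+
    have "is_module S E A" "is_module S E (S - A)"
      using A(1) no_edge unfolding is_module_def by blast+
    then have "card A = 1" "card (S - A) = 1"
      using A assms(2) unfolding prime_graph_def trivial_module_def by auto
    moreover have "finite S"
      using assms(1) finite_V by (rule finite_subset)
    then have "card (S - A) = card S - card A" "card A \<le> card S"
      using A(1) by (simp_all add: card_Diff_subset finite_subset card_mono)
    ultimately have "card S = 2"
      by linarith
    then show False
      using assms(2) unfolding prime_graph_def by simp
  qed
qed

lemma connected_on_insert:
  assumes "S \<subseteq> V" "connected_on E S" "u \<in> V" "s \<in> S" "E u s"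
  shows "connected_on E (insert u S)"
  unfolding connected_on_def
proof (intro allI impI)
  fix A assume A: "A \<subseteq> insert u S" "A \<noteq> {}" "A \<noteq> insert u S"
  consider "A \<inter> S = {}" | "S \<subseteq> A" | "A \<inter> S \<noteq> {}" "\<not> S \<subseteq> A"
    by blast
  then show "\<exists>a\<in>A. \<exists>b\<in>insert u S - A. E a b"
  proof cases
    case 1
    then have "A = {u}" "u \<notin> S"
      using A by auto
    then show ?thesis
      using assms(4,5) by auto
  next
    case 2
    then have "u \<notin> A" "E s u"
      using A assms adj_sym by auto
    then show ?thesis
      using 2 assms(4) by auto
  next
    case 3
    then have "\<exists>a\<in>A \<inter> S. \<exists>b\<in>S - A \<inter> S. E a b"
      using connected_onD[OF assms(2), of "A \<inter> S"] 3 by blast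
    then show ?thesis
      by auto
  qed
qed

lemma connected_on_neighbour:
  assumes "connected_on E S" "s \<in> S" "card S \<ge> 2"
  shows "\<exists>t\<in>S - {s}. E s t"
proof -
  have "{s} \<noteq> S"
    using assms(3) by auto
  then show ?thesis
    using connected_onD[OF assms(1), of "{s}"] assms(2) by blast
qed

lemma induced_path_imp_P5_le:
  assumes "set [v0, v1, v2, v3, v4] \<subseteq> V" "distinct [v0, v1, v2, v3, v4]"
    and "E v0 v1" "E v1 v2" "E v2 v3" "E v3 v4"
    and "\<not> E v0 v2" "\<not> E v0 v3" "\<not> E v0 v4" "\<not> E v1 v3" "\<not> E v1 v4" "\<not> E v2 v4"
  shows "induced_le P5_V P5_E V E"
proof -
  let ?f = "nth [v0, v1, v2, v3, v4]"
  have P5_V: "P5_V = {0, 1, 2, 3, 4}"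
    unfolding P5_V_def by auto
  have "inj_on ?f P5_V"
    using assms(2) by (intro inj_on_nth) (auto simp: P5_V)
  moreover have "?f ` P5_V \<subseteq> V"
    using assms(1) by (auto simp: P5_V)
  moreover have "\<forall>i\<in>P5_V. \<forall>j\<in>P5_V. P5_E i j \<longleftrightarrow> E (?f i) (?f j)"
    using assms adj_sym adj_irrefl by (simp add: P5_V P5_E_def)
  ultimately show ?thesis
    unfolding induced_le_def by blast
qed

end

locale bipartite_graph = simple_graph +
  fixes X Y :: "'a set"
  assumes bipartition: "bipartition V E X Y"
begin

lemma X_Un_Y: "X \<union> Y = V" and X_Int_Y: "X \<inter> Y = {}"
  using bipartition unfolding bipartition_def by blast+

lemma X_subset_V: "X \<subseteq> V"
  using X_Un_Y by blast

lemma finite_X: "finite X" and finite_Y: "finite Y"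
  using finite_V X_Un_Y by (metis finite_Un)+

lemma Y_iff_not_X: "a \<in> V \<Longrightarrow> a \<in> Y \<longleftrightarrow> a \<notin> X"
  using X_Un_Y X_Int_Y by blast

lemma adj_sides: "a \<in> V \<Longrightarrow> b \<in> V \<Longrightarrow> E a b \<Longrightarrow> a \<in> X \<longleftrightarrow> b \<notin> X"
  using bipartition Y_iff_not_X unfolding bipartition_def by blast

lemma no_adj_X: "a \<in> X \<Longrightarrow> b \<in> X \<Longrightarrow> \<not> E a b"
  using adj_sides[of a b] X_Un_Y by blast

lemma no_adj_Y: "a \<in> Y \<Longrightarrow> b \<in> Y \<Longrightarrow> \<not> E a b"
  using adj_sides[of a b] X_Un_Y X_Int_Y by blast

lemma no_triangle: "a \<in> V \<Longrightarrow> b \<in> V \<Longrightarrow> c \<in> V \<Longrightarrow> E a b \<Longrightarrow> E b c \<Longrightarrow> \<not> E a c"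
  using adj_sides[of a b] adj_sides[of b c] adj_sides[of a c] by blast

lemma module_in_one_side_not_distinguished:
  assumes "is_module S E M" "M \<subseteq> X \<or> M \<subseteq> Y" "a \<in> M" "b \<in> M"
  shows "\<not> distinguished E S a b"
proof
  assume "distinguished E S a b"
  then obtain w where w: "w \<in> S - {a, b}" "E w a \<noteq> E w b"
    unfolding distinguished_def by blast
  show False
  proof (cases "w \<in> M")
    case True
    then show False
      using assms(2-4) w(2) no_adj_X no_adj_Y by blast
  next
    case False
    then show False
      using assms(1,3,4) w unfolding is_module_def by blast
  qed
qed

lemma module_across_sides_no_outside_neighbour:
  assumes "S \<subseteq> V" "is_module S E M" "x \<in> M \<inter> X" "y \<in> M \<inter> Y" "m \<in> M" "w \<in> S - M"
  shows "\<not> E w m"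
proof
  assume "E w m"
  then have "E w x" "E w y"
    using assms(2-6) unfolding is_module_def by blast+
  moreover have "w \<in> V" "x \<in> V" "y \<in> V"
    using assms(1-4,6) unfolding is_module_def by auto
  ultimately show False
    using adj_sides[of w x] adj_sides[of w y] Y_iff_not_X[of y] assms(3,4) by blast
qed

lemma twin_free_connected_imp_prime:
  assumes S: "S \<subseteq> V" "card S \<ge> 3" and tf: "twin_free E S" and conn: "connected_on E S"
  shows "prime_graph S E"
  unfolding prime_graph_def
proof (intro conjI allI impI)
  fix M assume M: "is_module S E M"
  then have "M \<subseteq> S"
    unfolding is_module_def by blast
  show "trivial_module S M"
  proof (rule ccontr)
    assume nontrivial: "\<not> trivial_module S M"
    have "finite M"
      using \<open>M \<subseteq> S\<close> S(1) finite_V by (meson finite_subset subset_trans)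
    moreover have "\<not> card M \<le> Suc 0"
      using nontrivial \<open>finite M\<close> by (auto simp: trivial_module_def le_Suc_eq)
    ultimately obtain a b where ab: "a \<in> M" "b \<in> M" "a \<noteq> b"
      using card_le_Suc0_iff_eq[OF \<open>finite M\<close>] by blast
    show False
    proof (cases "M \<subseteq> X \<or> M \<subseteq> Y")
      case True
      then show False
        using module_in_one_side_not_distinguished[OF M True ab(1,2)] tf ab \<open>M \<subseteq> S\<close>
        unfolding twin_free_def by blast
    next
      case False
      then obtain x y where "x \<in> M \<inter> X" "y \<in> M \<inter> Y"
        using \<open>M \<subseteq> S\<close> S(1) Y_iff_not_X by blast
      moreover obtain m w where "m \<in> M" "w \<in> S - M" "E m w"
        using connected_onD[OF conn \<open>M \<subseteq> S\<close>] nontrivial unfolding trivial_module_def by blast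
      moreover have "E w m"
        using calculation(3-5) \<open>M \<subseteq> S\<close> S(1) adj_sym by blast
      ultimately show False
        using module_across_sides_no_outside_neighbour[OF S(1) M] by blast
    qed
  qed
qed (use S in simp)

lemma path_imp_P5_le:
  assumes "set [v0, v1, v2, v3, v4] \<subseteq> V"
    and e: "E v0 v1" "E v1 v2" "E v2 v3" "E v3 v4" and ne: "\<not> E v0 v3" "\<not> E v1 v4"
  shows "induced_le P5_V P5_E V E"
proof -
  have V: "v0 \<in> V" "v1 \<in> V" "v2 \<in> V" "v3 \<in> V" "v4 \<in> V"
    using assms(1) by auto
  have "\<not> E v0 v2" "\<not> E v1 v3" "\<not> E v2 v4"
    by (rule no_triangle[OF V(1-3) e(1,2)], rule no_triangle[OF V(2-4) e(2,3)],
        rule no_triangle[OF V(3-5) e(3,4)])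
  moreover have "\<not> E v0 v4"
    using adj_sides[OF V(1,2) e(1)] adj_sides[OF V(2,3) e(2)] adj_sides[OF V(3,4) e(3)]
      adj_sides[OF V(4,5) e(4)] adj_sides[OF V(1,5)] by blast
  moreover have "distinct [v0, v1, v2, v3, v4]"
    using calculation e ne adj_irrefl[OF V(1)] adj_irrefl[OF V(2)] adj_irrefl[OF V(3)]
      adj_irrefl[OF V(4)] adj_sym[OF V(2,4)] adj_sym[OF V(2,5)] by auto
  ultimately show ?thesis
    using induced_path_imp_P5_le[OF assms(1) _ e] ne by blast
qed

lemma twin_free_insert_mimic:
  assumes S: "S \<subseteq> V" "twin_free E S"
    and u: "u \<in> V - S" "mimics E S u s" and w: "w \<in> V - S" "w \<noteq> u" "E w u \<noteq> E w s"
    and s: "s \<in> S" "t \<in> S - {s}" "E s t"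
  shows "twin_free E (insert u (insert w S))"
proof (rule twin_free_extend[OF S(2)])
  let ?T = "insert u (insert w S)"
  have V: "s \<in> V" "t \<in> V" "u \<in> V" "w \<in> V"
    using S s u w by auto
  have tu: "E t u" "E t s"
    using u s V adj_sym unfolding mimics_def by auto
  have not_us: "\<not> E u s"
    using no_triangle[of u t s] V tu adj_sym by blast
  have u_w: "distinguished E ?T u w"
  proof (cases "E t w")
    case True
    then have "E s w" "\<not> E s u"
      using no_triangle[of u t w] V w(3) tu not_us adj_sym by blast+
    then show ?thesis
      using s u w by (intro distinguishedI[of s]) auto
  next
    case False
    then show ?thesis
      using s u w tu by (intro distinguishedI[of t]) auto
  qed
  have u_S: "distinguished E ?T u b" if b: "b \<in> S" for b
  proof (cases "b = s")
    case False
    then obtain z where "z \<in> S - {s, b}" "E z s \<noteq> E z b"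
      using S(2) s b unfolding twin_free_def distinguished_def by blast
    then show ?thesis
      using u by (intro distinguishedI[of z]) (auto simp: mimics_def)
  next
    case True
    then show ?thesis
      using u w s(1) by (intro distinguishedI[of w]) auto
  qed
  have w_S: "distinguished E ?T w b" if b: "b \<in> S" for b
  proof (cases "b = s")
    case True
    show ?thesis
    proof (cases "E u w")
      case True
      then show ?thesis
        using \<open>b = s\<close> not_us u w by (intro distinguishedI[of u]) auto
    next
      case False
      then have "E s w"
        using w(3) V adj_sym by blast
      then have "\<not> E t w"
        using no_triangle[of t s w] V tu by blast
      then show ?thesis
        using \<open>b = s\<close> tu s w by (intro distinguishedI[of t]) auto
    qed
  next
    case False
    have "E u b = E s b" "E u w \<noteq> E s w"
      using u w b False V S(1) adj_sym unfolding mimics_def by auto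
    show ?thesis
    proof (cases "E u w = E u b")
      case True
      then show ?thesis
        using \<open>E u b = E s b\<close> \<open>E u w \<noteq> E s w\<close> False s w b
        by (intro distinguishedI[of s]) auto
    next
      case False
      then show ?thesis
        using u w b by (intro distinguishedI[of u]) auto
    qed
  qed
  fix a b assume "a \<in> ?T - S" "b \<in> ?T" "a \<noteq> b"
  then show "distinguished E ?T a b"
    using u_w u_S w_S distinguished_sym[of E ?T w u] by auto
qed auto

lemma pair_extension_mimic:
  assumes W: "W \<subseteq> V" "twin_free E W"
    and S: "S \<subseteq> W" "twin_free E S" "connected_on E S" "card S \<ge> 2"
    and u: "u \<in> W - S" "s \<in> S" "mimics E S u s"
  shows "\<exists>w\<in>W - S. u \<noteq> w \<and> twin_free E (insert u (insert w S))
           \<and> connected_on E (insert u (insert w S))"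
proof -
  have SV: "S \<subseteq> V"
    using S(1) W(1) by blast
  obtain t where t: "t \<in> S - {s}" "E s t"
    using connected_on_neighbour[OF S(3) u(2) S(4)] by blast
  have in_V: "s \<in> V" "t \<in> V" "u \<in> V"
    using W(1) SV u t by auto
  then have "E u t"
    using t u(3) adj_sym[of t] unfolding mimics_def by auto
  have "u \<noteq> s" "s \<in> W"
    using u S(1) by auto
  then have "distinguished E W u s"
    using W(2) u(1) unfolding twin_free_def by blast
  then obtain w where w: "w \<in> W - {u, s}" "E w u \<noteq> E w s"
    unfolding distinguished_def by blast
  have "w \<notin> S" "w \<in> V"
    using w u(3) W(1) unfolding mimics_def by auto
  have conn_u: "connected_on E (insert u S)"
    using connected_on_insert[OF SV S(3) in_V(3) _ \<open>E u t\<close>] t(1) by blast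
  have "connected_on E (insert w (insert u S))"
  proof (cases "E w u")
    case True
    then show ?thesis
      using connected_on_insert[OF _ conn_u \<open>w \<in> V\<close>] SV in_V(3) by blast
  next
    case False
    then show ?thesis
      using connected_on_insert[OF _ conn_u \<open>w \<in> V\<close>, of s] w(2) SV in_V(3) u(2) by blast
  qed
  moreover have "twin_free E (insert u (insert w S))"
    using twin_free_insert_mimic[OF SV S(2) _ u(3) _ _ w(2) u(2) t] in_V(3) u(1) w(1)
      \<open>w \<in> V\<close> \<open>w \<notin> S\<close> by blast
  ultimately show ?thesis
    using w \<open>w \<notin> S\<close> by (intro bexI[of _ w]) (auto simp: insert_commute)
qed

lemma pair_extension_no_mimic:
  assumes W: "W \<subseteq> V" "twin_free E W" "connected_on E W"
    and S: "S \<subseteq> W" "twin_free E S" "connected_on E S" "S \<noteq> {}"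
    and R: "card (W - S) \<ge> 2" and no_mimic: "\<forall>u\<in>W - S. \<forall>s\<in>S. \<not> mimics E S u s"
  shows "\<exists>p\<in>W - S. \<exists>z\<in>W - S. p \<noteq> z \<and> twin_free E (insert p (insert z S))
           \<and> connected_on E (insert p (insert z S))"
proof -
  have SV: "S \<subseteq> V"
    using S(1) W(1) by blast
  have "S \<noteq> W"
    using R by auto
  then obtain t u where tu: "t \<in> S" "u \<in> W - S" "E t u"
    using connected_onD[OF W(3) S(1,4)] by blast
  have in_V: "t \<in> V" "u \<in> V"
    using tu W(1) SV by auto
  have conn_u: "connected_on E (insert u S)"
    using connected_on_insert[OF SV S(3) in_V(2) tu(1)] tu(3) adj_sym in_V by blast
  have uS_ne: "insert u S \<noteq> W"
  proof
    assume "insert u S = W"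
    then have "W - S = {u}"
      using tu(2) by auto
    then show False
      using R by simp
  qed
  have "insert u S \<subseteq> W"
    using S(1) tu(2) by blast
  then obtain a y where ay: "a \<in> insert u S" "y \<in> W - insert u S" "E a y"
    using connected_onD[OF W(3) _ _ uS_ne] by blast
  have "y \<in> V" "a \<in> V" "insert u S \<subseteq> V"
    using ay W(1) SV in_V by auto
  show ?thesis
  proof (cases "\<exists>w\<in>S. E w u \<noteq> E w y")
    case True
    then obtain w where w: "w \<in> S" "E w u \<noteq> E w y"
      by blast
    have "twin_free E (insert u (insert y S))"
      using twin_free_insert2[OF S(2) _ _ _ _ _ w] no_mimic tu(2) ay(2) by auto
    moreover have "connected_on E (insert y (insert u S))"
      using connected_on_insert[OF \<open>insert u S \<subseteq> V\<close> conn_u \<open>y \<in> V\<close> ay(1)] ay(3)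
        adj_sym[OF \<open>a \<in> V\<close> \<open>y \<in> V\<close>] by blast
    then have "connected_on E (insert u (insert y S))"
      by (simp add: insert_commute)
    moreover have "u \<in> W - S" "y \<in> W - S" "u \<noteq> y"
      using tu(2) ay(2) by auto
    ultimately show ?thesis
      by blast
  next
    case False
    then have "E t y"
      using tu by auto
    have "u \<noteq> y" "u \<in> W" "y \<in> W"
      using tu(2) ay(2) by auto
    then have "distinguished E W u y"
      using W(2) unfolding twin_free_def by blast
    then obtain z where z: "z \<in> W - {u, y}" "E z u \<noteq> E z y"
      unfolding distinguished_def by blast
    then have "z \<notin> S" "z \<in> V"
      using False W(1) by auto
    obtain p where p: "p \<in> {u, y}" "E z p"
      using z(2) by blast
    then have "p \<in> W - S" "E t p" "p \<noteq> z" "p \<in> V"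
      using tu ay(2) \<open>E t y\<close> z(1) W(1) by auto
    have "connected_on E (insert p S)"
      using connected_on_insert[OF SV S(3) \<open>p \<in> V\<close> tu(1)] \<open>E t p\<close>
        adj_sym[OF in_V(1) \<open>p \<in> V\<close>] by blast
    then have "connected_on E (insert z (insert p S))"
      using connected_on_insert[OF _ _ \<open>z \<in> V\<close> _ p(2)] SV \<open>p \<in> V\<close> by blast
    moreover have "\<not> E t z"
      using no_triangle[OF in_V(1) \<open>p \<in> V\<close> \<open>z \<in> V\<close> \<open>E t p\<close>] p(2)
        adj_sym[OF \<open>p \<in> V\<close> \<open>z \<in> V\<close>] by blast
    then have "twin_free E (insert p (insert z S))"
      using twin_free_insert2[OF S(2) _ \<open>z \<notin> S\<close> \<open>p \<noteq> z\<close> _ _ tu(1)] no_mimic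
        \<open>p \<in> W - S\<close> z(1) \<open>z \<notin> S\<close> \<open>E t p\<close> by auto
    moreover have "z \<in> W - S"
      using z(1) \<open>z \<notin> S\<close> by blast
    ultimately show ?thesis
      using \<open>p \<in> W - S\<close> \<open>p \<noteq> z\<close> by (metis insert_commute)
  qed
qed

lemma prime_pair_extension:
  assumes W: "W \<subseteq> V" "prime_graph W E" and S: "S \<subseteq> W" "prime_graph S E"
    and R: "card (W - S) \<ge> 2"
  shows "\<exists>x\<in>W - S. \<exists>y\<in>W - S. x \<noteq> y \<and> prime_graph (insert x (insert y S)) E"
proof -
  have SV: "S \<subseteq> V"
    using S(1) W(1) by blast
  have "card S \<ge> 3"
    using S(2) unfolding prime_graph_def by blast
  then have "S \<noteq> {}" "card S \<ge> 2"
    by auto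
  have W_tc: "twin_free E W" "connected_on E W"
    using W prime_imp_twin_free prime_imp_connected_on by blast+
  have S_tc: "twin_free E S" "connected_on E S"
    using S(2) SV prime_imp_twin_free prime_imp_connected_on by blast+
  obtain x y where xy: "x \<in> W - S" "y \<in> W - S" "x \<noteq> y"
    "twin_free E (insert x (insert y S))" "connected_on E (insert x (insert y S))"
  proof (cases "\<exists>u\<in>W - S. \<exists>s\<in>S. mimics E S u s")
    case True
    then show ?thesis
      using pair_extension_mimic[OF W(1) W_tc(1) S(1) S_tc \<open>card S \<ge> 2\<close>] that by blast
  next
    case False
    then show ?thesis
      using pair_extension_no_mimic[OF W(1) W_tc S(1) S_tc \<open>S \<noteq> {}\<close> R] that by blast
  qed
  moreover have "insert x (insert y S) \<subseteq> V"
    using xy(1,2) W(1) SV by blast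
  moreover have "card (insert x (insert y S)) \<ge> 3"
    using \<open>card S \<ge> 3\<close> finite_V \<open>insert x (insert y S) \<subseteq> V\<close>
    by (meson card_mono finite_subset le_trans subset_insertI2 subset_insertI order_refl)
  ultimately show ?thesis
    using twin_free_connected_imp_prime by blast
qed

lemma prime_extension_close_to:
  assumes W: "W \<subseteq> V" "prime_graph W E"
  shows "T \<subseteq> W \<Longrightarrow> prime_graph T E \<Longrightarrow> T \<noteq> W \<Longrightarrow>
    \<exists>T'. T \<subseteq> T' \<and> T' \<subseteq> W \<and> prime_graph T' E \<and> card (W - T') \<in> {1, 2}"
proof (induction "card (W - T)" arbitrary: T rule: less_induct)
  case less
  have "finite W"
    using W(1) finite_V by (rule finite_subset)
  show ?case
  proof (cases "card (W - T) \<le> 2")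
    case True
    moreover have "card (W - T) \<noteq> 0"
      using less.prems \<open>finite W\<close> by auto
    ultimately show ?thesis
      using less.prems by auto
  next
    case False
    then obtain x y where xy: "x \<in> W - T" "y \<in> W - T" "x \<noteq> y"
      "prime_graph (insert x (insert y T)) E"
      using prime_pair_extension[OF W less.prems(1,2)] by auto
    let ?T = "insert x (insert y T)"
    have "W - ?T = (W - T) - {x, y}"
      by blast
    then have "card (W - ?T) = card (W - T) - 2"
      using xy card_Diff_subset[of "{x, y}" "W - T"] by simp
    then have "card (W - ?T) < card (W - T)" "?T \<noteq> W"
      using False by auto
    moreover have "?T \<subseteq> W"
      using xy(1,2) less.prems(1) by blast
    ultimately obtain T' where "?T \<subseteq> T'" "T' \<subseteq> W" "prime_graph T' E" "card (W - T') \<in> {1, 2}"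
      using less.hyps[of ?T] xy(4) by blast
    then show ?thesis
      by blast
  qed
qed

lemma prime_with_noncritical_prime_subgraph:
  assumes T: "prime_graph T E" "v \<in> T" "prime_graph (T - {v}) E"
  shows "S \<subseteq> V \<Longrightarrow> prime_graph S E \<Longrightarrow> T \<subseteq> S \<Longrightarrow> \<exists>x\<in>S. prime_graph (S - {x}) E"
proof (induction "card S" arbitrary: S rule: less_induct)
  case less
  show ?case
  proof (cases "T = S")
    case True
    then show ?thesis
      using T(2,3) by blast
  next
    case False
    then obtain T' where T': "T \<subseteq> T'" "T' \<subseteq> S" "prime_graph T' E" "card (S - T') \<in> {1, 2}"
      using prime_extension_close_to[OF less.prems(1,2,3) T(1)] by blast
    have "finite S"
      using less.prems(1) finite_V by (rule finite_subset)
    show ?thesis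
    proof (cases "card (S - T') = 1")
      case True
      then obtain x where "S - T' = {x}"
        by (rule card_1_singletonE)
      then have "T' = S - {x}" "x \<in> S"
        using T'(2) by auto
      then show ?thesis
        using T'(3) by blast
    next
      case False
      then have "card (S - T') = 2"
        using T'(4) by auto
      then obtain x y where xy: "S - T' = {x, y}" "x \<noteq> y"
        by (meson card_2_iff)
      then have "T' \<subset> S"
        using T'(2) by blast
      with \<open>finite S\<close> have "card T' < card S"
        by (rule psubset_card_mono)
      moreover have "T' \<subseteq> V"
        using T'(2) less.prems(1) by blast
      ultimately obtain z where z: "z \<in> T'" "prime_graph (T' - {z}) E"
        using less.hyps[of T'] T'(1,3) by blast
      have S_minus: "S - (T' - {z}) = {x, y, z}"
        using xy z(1) T'(2) by auto
      moreover have "z \<noteq> x" "z \<noteq> y"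
        using xy z(1) by auto
      ultimately have "card (S - (T' - {z})) \<ge> 2"
        using xy(2) by simp
      moreover have "T' - {z} \<subseteq> S"
        using T'(2) by blast
      ultimately obtain a b where ab: "a \<in> {x, y, z}" "b \<in> {x, y, z}" "a \<noteq> b"
          "prime_graph (insert a (insert b (T' - {z}))) E"
        using prime_pair_extension[OF less.prems(1,2) _ z(2)] S_minus by blast
      moreover obtain c where "{x, y, z} = {a, b, c}" "c \<notin> {a, b}"
        using ab(1-3) xy(2) \<open>z \<noteq> x\<close> \<open>z \<noteq> y\<close> by auto
      ultimately have "insert a (insert b (T' - {z})) = S - {c}" "c \<in> S"
        using S_minus T'(2) z(1) by auto
      then show ?thesis
        using ab(4) by metis
    qed
  qed
qed

lemma critical_imp_P5_free:
  assumes "critical V E"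
  shows "\<not> induced_le P5_V P5_E V E"
proof
  assume "induced_le P5_V P5_E V E"
  then obtain f where f: "inj_on f P5_V" "f ` P5_V \<subseteq> V"
    "\<forall>i\<in>P5_V. \<forall>j\<in>P5_V. P5_E i j \<longleftrightarrow> E (f i) (f j)"
    unfolding induced_le_def by blast
  have "0 \<in> P5_V"
    by (simp add: P5_V_def)
  have "f ` (P5_V - {0}) = f ` P5_V - {f 0}"
    using f(1) \<open>0 \<in> P5_V\<close> by (auto simp: inj_on_eq_iff)
  moreover have "prime_graph (f ` (P5_V - {0})) E"
    using f(3) by (intro prime_graph_embedding[OF inj_on_subset[OF f(1)] _ prime_P5_minus_endpoint]) auto
  moreover have "prime_graph (f ` P5_V) E"
    using f(1,3) prime_P5 by (rule prime_graph_embedding)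
  moreover have "prime_graph V E"
    using assms unfolding critical_def by blast
  ultimately obtain x where "x \<in> V" "prime_graph (V - {x}) E"
    using prime_with_noncritical_prime_subgraph[of "f ` P5_V" "f 0" V] f(2) \<open>0 \<in> P5_V\<close> by auto
  then show False
    using assms unfolding critical_def by blast
qed

lemma half_graphI:
  assumes "linear_order_on X L" "bij_betw \<phi> X Y"
    and adj: "\<And>x x'. x \<in> X \<Longrightarrow> x' \<in> X \<Longrightarrow> E x (\<phi> x') \<longleftrightarrow> (x, x') \<in> L"
  shows "half_graph V E"
  unfolding half_graph_def
proof (intro exI conjI ballI)
  show "X \<union> Y = V" "X \<inter> Y = {}"
    by (fact X_Un_Y, fact X_Int_Y)
  show "linear_order_on X L" "bij_betw \<phi> X Y"
    by (fact assms(1), fact assms(2))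
  have Y_eq: "Y = \<phi> ` X"
    using assms(2) unfolding bij_betw_def by blast
  fix u w assume uw: "u \<in> V" "w \<in> V"
  show "E u w \<longleftrightarrow> (\<exists>x\<in>X. \<exists>x'\<in>X. (x, x') \<in> L \<and> (u = x \<and> w = \<phi> x' \<or> w = x \<and> u = \<phi> x'))"
  proof (cases "u \<in> X")
    case True
    then have "E u w \<longleftrightarrow> w \<in> Y \<and> E u w"
      using adj_sides[OF uw] Y_iff_not_X[OF uw(2)] by blast
    also have "\<dots> \<longleftrightarrow> (\<exists>x'\<in>X. w = \<phi> x' \<and> (u, x') \<in> L)"
      using Y_eq adj True by blast
    finally show ?thesis
      using True Y_eq X_Int_Y by blast
  next
    case False
    then have "u \<in> Y"
      using Y_iff_not_X[OF uw(1)] by blast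
    then have "E u w \<longleftrightarrow> w \<in> X \<and> E w u"
      using adj_sides[OF uw] adj_sym[OF uw] False by blast
    also have "\<dots> \<longleftrightarrow> (\<exists>x'\<in>X. u = \<phi> x' \<and> w \<in> X \<and> (w, x') \<in> L)"
      using Y_eq adj \<open>u \<in> Y\<close> by blast
    finally show ?thesis
      using False Y_eq by blast
  qed
qed

end

locale prime_P5_free_bipartite = bipartite_graph +
  assumes prime: "prime_graph V E" and P5_free: "\<not> induced_le P5_V P5_E V E"
begin

definition nbhd :: "'a \<Rightarrow> 'a set" where
  "nbhd x = {y \<in> V. E x y}"

lemma nbhd_subset: "nbhd x \<subseteq> V"
  unfolding nbhd_def by blast

lemma finite_nbhd: "finite (nbhd x)"
  using nbhd_subset finite_V by (rule finite_subset)

lemma nbhd_X_subset_Y: "x \<in> X \<Longrightarrow> nbhd x \<subseteq> Y"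
  unfolding nbhd_def using adj_sides Y_iff_not_X X_Un_Y by blast

lemma nbhd_Y_subset_X: "y \<in> Y \<Longrightarrow> nbhd y \<subseteq> X"
  unfolding nbhd_def using adj_sides Y_iff_not_X X_Un_Y by blast

lemma mem_nbhd_sym: "x \<in> V \<Longrightarrow> y \<in> V \<Longrightarrow> y \<in> nbhd x \<longleftrightarrow> x \<in> nbhd y"
  unfolding nbhd_def using adj_sym[of x y] by auto

lemma card_V: "card V \<ge> 3"
  using prime unfolding prime_graph_def by blast

lemma nbhd_inj: "p \<in> V \<Longrightarrow> q \<in> V \<Longrightarrow> nbhd p = nbhd q \<Longrightarrow> p = q"
  using twins_not_prime[of p V q E] prime card_V adj_sym unfolding nbhd_def by blast

lemma nbhd_nonempty: "v \<in> V \<Longrightarrow> nbhd v \<noteq> {}"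
  using isolated_not_prime[of v V E] prime card_V finite_V unfolding nbhd_def by blast

lemma nbhd_comparable_if_common_neighbour:
  assumes pq: "p \<in> X" "q \<in> X" and c: "c \<in> nbhd p" "c \<in> nbhd q"
  shows "nbhd p \<subseteq> nbhd q \<or> nbhd q \<subseteq> nbhd p"
proof (rule ccontr)
  assume "\<not> ?thesis"
  then obtain yp yq where yp: "yp \<in> nbhd p" "yp \<notin> nbhd q" and yq: "yq \<in> nbhd q" "yq \<notin> nbhd p"
    by blast
  have V: "p \<in> V" "q \<in> V" "yp \<in> V" "yq \<in> V" "c \<in> V"
    using pq yp(1) yq(1) c(1) X_Un_Y nbhd_subset by blast+
  have "E yp p" "E p c" "E c q" "E q yq" "\<not> E yp q" "\<not> E p yq"
    using yp yq c V mem_nbhd_sym unfolding nbhd_def by auto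
  then show False
    using path_imp_P5_le[of yp p c q yq] V P5_free by auto
qed

lemma nbhd_chain:
  assumes "p \<in> X" "q \<in> X"
  shows "nbhd p \<subseteq> nbhd q \<or> nbhd q \<subseteq> nbhd p"
proof -
  have "finite (nbhd ` X)" "nbhd ` X \<noteq> {}"
    using finite_X assms(1) by auto
  then obtain m where m: "m \<in> nbhd ` X" "\<forall>b\<in>nbhd ` X. m \<subseteq> b \<longrightarrow> m = b"
    by (meson finite_has_maximal)
  from m(1) obtain a where a: "a \<in> X" "m = nbhd a"
    by blast
  have a_max: "nbhd a = nbhd x" if "x \<in> X" "nbhd a \<subseteq> nbhd x" for x
    using m(2) imageI[OF that(1), of nbhd] that(2) a(2) by blast
  have below_a: "nbhd x \<subseteq> nbhd a" if "x \<in> X" "c \<in> nbhd x" "c \<in> nbhd a" for x c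
    using nbhd_comparable_if_common_neighbour[OF that(1) a(1) that(2,3)] a_max[OF that(1)] by blast
  define M where "M = nbhd a \<union> {x \<in> X. nbhd x \<subseteq> nbhd a}"
  have closed: "w \<in> M" if "m \<in> M" "w \<in> V" "E m w" for m w
  proof (cases "m \<in> nbhd a")
    case True
    then have "m \<in> Y" "m \<in> V"
      using nbhd_X_subset_Y[OF a(1)] nbhd_subset by blast+
    then have "w \<in> X"
      using adj_sides[OF \<open>m \<in> V\<close> that(2,3)] Y_iff_not_X by blast
    moreover have "m \<in> nbhd w"
      using that(2,3) \<open>m \<in> V\<close> adj_sym unfolding nbhd_def by blast
    ultimately show ?thesis
      using below_a True unfolding M_def by blast
  next
    case False
    then show ?thesis
      using that unfolding M_def nbhd_def by blast
  qed
  have "M = V"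
  proof (rule ccontr)
    assume "M \<noteq> V"
    moreover have "a \<in> M" "M \<subseteq> V"
      using a(1) X_Un_Y nbhd_subset unfolding M_def by blast+
    ultimately obtain m w where "m \<in> M" "w \<in> V - M" "E m w"
      using connected_onD[OF prime_imp_connected_on[OF order_refl prime]] by blast
    then show False
      using closed by blast
  qed
  then have Y_nbhd_a: "Y \<subseteq> nbhd a"
    using X_Un_Y X_Int_Y unfolding M_def by blast
  show ?thesis
  proof (rule ccontr)
    assume "\<not> ?thesis"
    then obtain yp yq where yp: "yp \<in> nbhd p" "yp \<notin> nbhd q" and yq: "yq \<in> nbhd q" "yq \<notin> nbhd p"
      by blast
    then have "yp \<in> Y" "yq \<in> Y"
      using assms nbhd_X_subset_Y by blast+
    then have V: "p \<in> V" "q \<in> V" "yp \<in> V" "yq \<in> V" "a \<in> V"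
      using assms a(1) X_Un_Y by blast+
    have "E p yp" "E yp a" "E a yq" "E yq q" "\<not> E p yq" "\<not> E yp q"
      using yp yq Y_nbhd_a \<open>yp \<in> Y\<close> \<open>yq \<in> Y\<close> V mem_nbhd_sym unfolding nbhd_def by auto
    then show False
      using path_imp_P5_le[of p yp a yq q] V P5_free by auto
  qed
qed

definition nbhd_order :: "'a rel" where
  "nbhd_order = {(x, x'). x \<in> X \<and> x' \<in> X \<and> nbhd x' \<subseteq> nbhd x}"

lemma linear_order_on_nbhd_order: "linear_order_on X nbhd_order"
  unfolding order_on_defs
proof (intro conjI)
  show "nbhd_order \<subseteq> X \<times> X" "refl_on X nbhd_order" "trans nbhd_order" "total_on X nbhd_order"
    using nbhd_chain unfolding nbhd_order_def refl_on_def trans_def total_on_def by auto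
  show "antisym nbhd_order"
    using nbhd_inj X_Un_Y unfolding nbhd_order_def antisym_def by blast
qed

lemma nbhd_eq_upper_set:
  assumes "y \<in> Y" "x' \<in> nbhd y" "\<forall>x\<in>nbhd y. nbhd x' \<subseteq> nbhd x"
  shows "nbhd y = {x \<in> X. (x, x') \<in> nbhd_order}"
proof -
  have "y \<in> V"
    using assms(1) X_Un_Y by blast
  have "x \<in> nbhd y" if "x \<in> X" "nbhd x' \<subseteq> nbhd x" for x
  proof -
    have "x' \<in> V"
      using assms(2) nbhd_subset by blast
    then have "y \<in> nbhd x'"
      using assms(2) \<open>y \<in> V\<close> mem_nbhd_sym by blast
    then show ?thesis
      using that \<open>y \<in> V\<close> X_Un_Y mem_nbhd_sym by blast
  qed
  then show ?thesis
    using assms nbhd_Y_subset_X unfolding nbhd_order_def by blast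
qed

lemma subset_chain_nbhd: "A \<subseteq> X \<Longrightarrow> subset.chain UNIV (nbhd ` A)"
  unfolding subset_chain_def using nbhd_chain by blast

lemma ex_partner:
  assumes "x' \<in> X"
  shows "\<exists>y\<in>Y. nbhd y = {x \<in> X. (x, x') \<in> nbhd_order}"
proof -
  have "x' \<in> V"
    using assms X_Un_Y by blast
  define B where "B = nbhd ` {x \<in> X. nbhd x \<subset> nbhd x'}"
  have "\<Union>B \<subset> nbhd x'"
  proof (cases "B = {}")
    case True
    then show ?thesis
      using nbhd_nonempty[OF \<open>x' \<in> V\<close>] by blast
  next
    case False
    have "finite B"
      unfolding B_def using finite_X by simp
    moreover have "subset.chain UNIV B"
      unfolding B_def by (rule subset_chain_nbhd) blast
    ultimately have "\<Union>B \<in> B"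
      using False by (simp add: Union_in_chain)
    moreover have "\<forall>b\<in>B. b \<subset> nbhd x'"
      unfolding B_def by blast
    ultimately show ?thesis
      by blast
  qed
  then obtain y where y: "y \<in> nbhd x'" "y \<notin> \<Union>B"
    using psubset_imp_ex_mem by blast
  have "y \<in> Y" "y \<in> V"
    using y(1) nbhd_X_subset_Y[OF assms] nbhd_subset by blast+
  have "x' \<in> nbhd y"
    using y(1) mem_nbhd_sym[OF \<open>x' \<in> V\<close> \<open>y \<in> V\<close>] by blast
  moreover have "nbhd x' \<subseteq> nbhd x" if "x \<in> nbhd y" for x
  proof -
    have "x \<in> X" "x \<in> V"
      using that nbhd_Y_subset_X[OF \<open>y \<in> Y\<close>] nbhd_subset by blast+
    then have "y \<in> nbhd x"
      using that mem_nbhd_sym[OF \<open>y \<in> V\<close>] by blast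
    then show ?thesis
      using nbhd_chain[OF \<open>x \<in> X\<close> assms] y(2) \<open>x \<in> X\<close> unfolding B_def by blast
  qed
  ultimately show ?thesis
    using nbhd_eq_upper_set[OF \<open>y \<in> Y\<close>] \<open>y \<in> Y\<close> by blast
qed

lemma partner_surj:
  assumes "y \<in> Y"
  shows "\<exists>x'\<in>X. nbhd y = {x \<in> X. (x, x') \<in> nbhd_order}"
proof -
  have "nbhd y \<subseteq> X" "nbhd y \<noteq> {}"
    using assms nbhd_Y_subset_X nbhd_nonempty X_Un_Y by blast+
  then have "\<Inter>(nbhd ` nbhd y) \<in> nbhd ` nbhd y"
    by (intro Inter_in_chain[OF _ _ subset_chain_nbhd]) (simp_all add: finite_nbhd)
  then obtain x' where "x' \<in> nbhd y" "\<forall>x\<in>nbhd y. nbhd x' \<subseteq> nbhd x"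
    by blast
  then show ?thesis
    using nbhd_eq_upper_set[OF assms] \<open>nbhd y \<subseteq> X\<close> by blast
qed

definition partner :: "'a \<Rightarrow> 'a" where
  "partner x' = (SOME y. y \<in> Y \<and> nbhd y = {x \<in> X. (x, x') \<in> nbhd_order})"

lemma partner:
  assumes "x' \<in> X"
  shows "partner x' \<in> Y" "nbhd (partner x') = {x \<in> X. (x, x') \<in> nbhd_order}"
proof -
  have "\<exists>y. y \<in> Y \<and> nbhd y = {x \<in> X. (x, x') \<in> nbhd_order}"
    using ex_partner[OF assms] by blast
  then have "partner x' \<in> Y \<and> nbhd (partner x') = {x \<in> X. (x, x') \<in> nbhd_order}"
    unfolding partner_def by (rule someI_ex)
  then show "partner x' \<in> Y" "nbhd (partner x') = {x \<in> X. (x, x') \<in> nbhd_order}"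
    by blast+
qed

lemma adj_partner:
  assumes "x \<in> X" "x' \<in> X"
  shows "E x (partner x') \<longleftrightarrow> (x, x') \<in> nbhd_order"
proof -
  have "x \<in> V" "partner x' \<in> V"
    using assms partner(1)[OF assms(2)] X_Un_Y by blast+
  then have "E x (partner x') \<longleftrightarrow> x \<in> nbhd (partner x')"
    using adj_sym unfolding nbhd_def by blast
  also have "\<dots> \<longleftrightarrow> (x, x') \<in> nbhd_order"
    using partner(2)[OF assms(2)] assms(1) by blast
  finally show ?thesis .
qed

lemma bij_partner: "bij_betw partner X Y"
  unfolding bij_betw_def
proof
  show "inj_on partner X"
  proof (rule inj_onI)
    fix x1 x2 assume x: "x1 \<in> X" "x2 \<in> X" "partner x1 = partner x2"
    then have "(x1, x2) \<in> nbhd_order" "(x2, x1) \<in> nbhd_order"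
      using partner(2)[of x1] partner(2)[of x2] unfolding nbhd_order_def by auto
    then show "x1 = x2"
      using linear_order_on_nbhd_order unfolding order_on_defs by (metis antisymD)
  qed
  show "partner ` X = Y"
  proof (intro equalityI subsetI)
    fix y assume "y \<in> Y"
    then obtain x' where "x' \<in> X" "nbhd y = {x \<in> X. (x, x') \<in> nbhd_order}"
      using partner_surj by blast
    then have "nbhd y = nbhd (partner x')"
      using partner(2) by blast
    moreover have "y \<in> V" "partner x' \<in> V"
      using \<open>y \<in> Y\<close> partner(1)[OF \<open>x' \<in> X\<close>] X_Un_Y by blast+
    ultimately have "y = partner x'"
      using nbhd_inj by blast
    then show "y \<in> partner ` X"
      using \<open>x' \<in> X\<close> by blast
  qed (use partner(1) in blast)
qed

theorem half_graph: "half_graph V E"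
  using linear_order_on_nbhd_order bij_partner adj_partner by (rule half_graphI)

end

locale half_graph_structure = bipartite_graph +
  fixes L :: "'a rel" and \<phi> :: "'a \<Rightarrow> 'a"
  assumes linear: "linear_order_on X L" and bij: "bij_betw \<phi> X Y"
    and adj_\<phi>: "x \<in> X \<Longrightarrow> x' \<in> X \<Longrightarrow> E x (\<phi> x') \<longleftrightarrow> (x, x') \<in> L"

lemma half_graph_structureI:
  assumes "graph V E" "half_graph V E"
  shows "\<exists>X Y L \<phi>. half_graph_structure V E X Y L \<phi>"
proof -
  obtain X Y L \<phi> where XY: "X \<union> Y = V" "X \<inter> Y = {}" and L: "linear_order_on X L"
    and \<phi>: "bij_betw \<phi> X Y"
    and adj: "\<forall>u\<in>V. \<forall>w\<in>V. E u w \<longleftrightarrow>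
        (\<exists>x\<in>X. \<exists>x'\<in>X. (x, x') \<in> L \<and> (u = x \<and> w = \<phi> x' \<or> w = x \<and> u = \<phi> x'))"
    using assms(2) unfolding half_graph_def by blast
  have \<phi>_Y: "\<phi> x \<in> Y" if "x \<in> X" for x
    using \<phi> that unfolding bij_betw_def by blast
  have "bipartition V E X Y"
    unfolding bipartition_def
  proof (intro conjI ballI impI)
    fix u w assume "u \<in> V" "w \<in> V" "E u w"
    then obtain x x' where "x \<in> X" "x' \<in> X" "u = x \<and> w = \<phi> x' \<or> w = x \<and> u = \<phi> x'"
      using adj by blast
    then show "u \<in> X \<longleftrightarrow> w \<in> Y"
      using \<phi>_Y XY(2) by blast
  qed (fact XY)+
  moreover have "E x (\<phi> x') \<longleftrightarrow> (x, x') \<in> L" if "x \<in> X" "x' \<in> X" for x x'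
  proof -
    have "\<phi> x' \<notin> X" "x \<in> V" "\<phi> x' \<in> V"
      using that \<phi>_Y XY by blast+
    moreover have "\<phi> x' = \<phi> x'' \<longleftrightarrow> x' = x''" if "x'' \<in> X" for x''
      using \<phi> that \<open>x' \<in> X\<close> unfolding bij_betw_def by (blast dest: inj_onD)
    ultimately have "E x (\<phi> x') \<longleftrightarrow> (\<exists>a\<in>X. \<exists>b\<in>X. (a, b) \<in> L \<and> x = a \<and> x' = b)"
      using adj by blast
    then show ?thesis
      using that by blast
  qed
  ultimately have "half_graph_structure V E X Y L \<phi>"
    using assms(1) L \<phi> by unfold_locales blast+
  then show ?thesis
    by blast
qed

context half_graph_structure
begin

lemma L_refl: "x \<in> X \<Longrightarrow> (x, x) \<in> L"
  using linear unfolding order_on_defs refl_on_def by blast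

lemma L_trans: "(x, y) \<in> L \<Longrightarrow> (y, z) \<in> L \<Longrightarrow> (x, z) \<in> L"
  using linear unfolding order_on_defs by (blast dest: transD)

lemma L_antisym: "(x, y) \<in> L \<Longrightarrow> (y, x) \<in> L \<Longrightarrow> x = y"
  using linear unfolding order_on_defs antisym_def by blast

lemma L_total: "x \<in> X \<Longrightarrow> y \<in> X \<Longrightarrow> (x, y) \<in> L \<or> (y, x) \<in> L"
  using linear L_refl[of x] unfolding order_on_defs total_on_def by (cases "x = y") auto

lemma \<phi>_Y: "x \<in> X \<Longrightarrow> \<phi> x \<in> Y"
  using bij unfolding bij_betw_def by blast

lemma \<phi>_V: "x \<in> X \<Longrightarrow> \<phi> x \<in> V" and \<phi>_not_X: "x \<in> X \<Longrightarrow> \<phi> x \<notin> X"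
  using \<phi>_Y X_Un_Y X_Int_Y by blast+

lemma \<phi>_inj: "x \<in> X \<Longrightarrow> y \<in> X \<Longrightarrow> \<phi> x = \<phi> y \<Longrightarrow> x = y"
  using bij unfolding bij_betw_def by (blast dest: inj_onD)

lemma Y_\<phi>: "y \<in> Y \<Longrightarrow> \<exists>x\<in>X. y = \<phi> x"
  using bij unfolding bij_betw_def by blast

lemma adj_\<phi>': "x \<in> X \<Longrightarrow> x' \<in> X \<Longrightarrow> E (\<phi> x') x \<longleftrightarrow> (x, x') \<in> L"
  using adj_\<phi> adj_sym[of x "\<phi> x'"] \<phi>_Y X_Un_Y by blast

lemma card_V_eq: "card V = 2 * card X"
  using card_Un_disjoint[OF finite_X finite_Y X_Int_Y] X_Un_Y bij_betw_same_card[OF bij] by simp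

lemma distinguished_X_X:
  assumes "x \<in> X" "x' \<in> X" "(x, x') \<in> L" "x \<noteq> x'"
  shows "distinguished E V x x'"
proof (rule distinguishedI[of "\<phi> x"])
  show "\<phi> x \<in> V" "\<phi> x \<noteq> x" "\<phi> x \<noteq> x'"
    using assms(1,2) \<phi>_V \<phi>_not_X by metis+
  show "E (\<phi> x) x \<noteq> E (\<phi> x) x'"
    using assms adj_\<phi>' L_refl L_antisym by blast
qed

lemma distinguished_Y_Y:
  assumes "x \<in> X" "x' \<in> X" "(x, x') \<in> L" "x \<noteq> x'"
  shows "distinguished E V (\<phi> x) (\<phi> x')"
proof (rule distinguishedI[of x'])
  show "x' \<in> V"
    using assms(2) X_subset_V by blast
  show "x' \<noteq> \<phi> x" "x' \<noteq> \<phi> x'"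
    using assms(1,2) \<phi>_not_X by metis+
  show "E x' (\<phi> x) \<noteq> E x' (\<phi> x')"
    using assms adj_\<phi> L_refl L_antisym by blast
qed

lemma distinguished_X_Y:
  assumes "card X \<ge> 2" "x \<in> X" "y \<in> Y"
  shows "distinguished E V x y"
proof (cases "y = \<phi> x")
  case True
  have "\<not> X \<subseteq> {x}"
  proof
    assume "X \<subseteq> {x}"
    then have "card X \<le> 1"
      using card_mono[of "{x}" X] by simp
    with assms(1) show False
      by simp
  qed
  then obtain z where z: "z \<in> X" "z \<noteq> x"
    by blast
  show ?thesis
  proof (cases "(x, z) \<in> L")
    case True
    show ?thesis
    proof (rule distinguishedI[of "\<phi> z"])
      show "\<phi> z \<in> V" "\<phi> z \<noteq> x" "\<phi> z \<noteq> y"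
        using z assms(2) \<open>y = \<phi> x\<close> \<phi>_V \<phi>_not_X \<phi>_inj by metis+
      show "E (\<phi> z) x \<noteq> E (\<phi> z) y"
        using adj_\<phi>'[OF assms(2) z(1)] True no_adj_Y[OF \<phi>_Y[OF z(1)] assms(3)] by blast
    qed
  next
    case False
    then have "(z, x) \<in> L"
      using L_total z(1) assms(2) by blast
    show ?thesis
    proof (rule distinguishedI[of z])
      show "z \<in> V" "z \<noteq> x" "z \<noteq> y"
        using z assms(3) X_subset_V \<open>y = \<phi> x\<close> \<phi>_not_X assms(2) by auto
      show "E z x \<noteq> E z y"
        using adj_\<phi>[OF z(1) assms(2)] \<open>(z, x) \<in> L\<close> \<open>y = \<phi> x\<close> no_adj_X[OF z(1) assms(2)] by blast
    qed
  qed
next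
  case False
  show ?thesis
  proof (rule distinguishedI[of "\<phi> x"])
    show "\<phi> x \<in> V" "\<phi> x \<noteq> x" "\<phi> x \<noteq> y"
      using assms(2) False \<phi>_V \<phi>_not_X by metis+
    show "E (\<phi> x) x \<noteq> E (\<phi> x) y"
      using adj_\<phi>'[OF assms(2,2)] L_refl[OF assms(2)] no_adj_Y[OF \<phi>_Y[OF assms(2)] assms(3)] by blast
  qed
qed

lemma twin_free:
  assumes "card V \<ge> 3"
  shows "twin_free E V"
  unfolding twin_free_def
proof (intro ballI impI)
  have "card X \<ge> 2"
    using assms card_V_eq by linarith
  fix a b assume ab: "a \<in> V" "b \<in> V" "a \<noteq> b"
  consider "a \<in> X" "b \<in> X" | "a \<in> X" "b \<in> Y" | "a \<in> Y" "b \<in> X" | "a \<in> Y" "b \<in> Y"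
    using ab(1,2) X_Un_Y by blast
  then show "distinguished E V a b"
  proof cases
    case 1
    then show ?thesis
      using distinguished_X_X[of a b] distinguished_X_X[of b a] L_total ab(3)
        distinguished_sym[of E V a b] by blast
  next
    case 2
    then show ?thesis
      using distinguished_X_Y \<open>card X \<ge> 2\<close> by blast
  next
    case 3
    then show ?thesis
      using distinguished_X_Y[of b a] \<open>card X \<ge> 2\<close> distinguished_sym[of E V a b] by blast
  next
    case 4
    then obtain x x' where "x \<in> X" "x' \<in> X" "a = \<phi> x" "b = \<phi> x'"
      using Y_\<phi> by blast
    then show ?thesis
      using distinguished_Y_Y[of x x'] distinguished_Y_Y[of x' x] L_total ab(3)
        distinguished_sym[of E V a b] by blast
  qed
qed

lemma connected: "connected_on E V"
  unfolding connected_on_def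
proof (intro allI impI)
  fix A assume A: "A \<subseteq> V" "A \<noteq> {}" "A \<noteq> V"
  show "\<exists>a\<in>A. \<exists>b\<in>V - A. E a b"
  proof (rule ccontr)
    assume "\<not> ?thesis"
    then have closed: "a \<in> A \<longleftrightarrow> b \<in> A" if "a \<in> V" "b \<in> V" "E a b" for a b
      using that adj_sym by blast
    have \<phi>_closed: "x \<in> A \<longleftrightarrow> \<phi> x' \<in> A" if "x \<in> X" "x' \<in> X" "(x, x') \<in> L" for x x'
      using closed[of x "\<phi> x'"] that adj_\<phi> \<phi>_Y X_Un_Y by blast
    have X_closed: "x \<in> A \<longleftrightarrow> x' \<in> A" if "x \<in> X" "x' \<in> X" for x x'
      using L_total[OF that] \<phi>_closed[OF that] \<phi>_closed[OF that(2,1)]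
        \<phi>_closed[OF that(1,1) L_refl] \<phi>_closed[OF that(2,2) L_refl] that by blast
    have "v \<in> A \<longleftrightarrow> x \<in> A" if v: "v \<in> V" and x: "x \<in> X" for v x
    proof (cases "v \<in> X")
      case False
      then obtain x' where "x' \<in> X" "v = \<phi> x'"
        using Y_\<phi> Y_iff_not_X[OF v] by blast
      then show ?thesis
        using X_closed[OF x \<open>x' \<in> X\<close>] \<phi>_closed[of x' x'] L_refl by blast
    qed (use X_closed x in blast)
    moreover obtain a b where "a \<in> A" "b \<in> V - A"
      using A by blast
    moreover obtain x where "x \<in> X"
      using \<open>a \<in> A\<close> A(1) X_Un_Y Y_\<phi> by blast
    ultimately show False
      using A(1) by blast
  qed
qed

lemma prime: "card V \<ge> 3 \<Longrightarrow> prime_graph V E"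
  using twin_free_connected_imp_prime[OF order_refl] twin_free connected by blast

lemma delete_X_not_prime:
  assumes "card V \<ge> 4" "v \<in> X"
  shows "\<not> prime_graph (V - {v}) E"
proof -
  have card: "card (V - {v}) \<ge> 3" "finite (V - {v})"
    using assms finite_V X_subset_V by auto
  define P where "P = {x \<in> X. (x, v) \<in> L \<and> x \<noteq> v}"
  show ?thesis
  proof (cases "P = {}")
    case True
    have "\<not> E (\<phi> v) w" if "w \<in> V - {v}" for w
    proof
      assume "E (\<phi> v) w"
      then have "w \<in> X"
        using adj_sides[OF \<phi>_V[OF assms(2)]] that \<phi>_not_X[OF assms(2)] by blast
      then have "(w, v) \<in> L"
        using adj_\<phi>'[OF _ assms(2)] \<open>E (\<phi> v) w\<close> by blast
      then show False
        using True \<open>w \<in> X\<close> that unfolding P_def by blast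
    qed
    moreover have "\<phi> v \<in> V - {v}"
      using \<phi>_V[OF assms(2)] \<phi>_not_X[OF assms(2)] assms(2) by auto
    ultimately show ?thesis
      using isolated_not_prime[OF _ card(2,1)] by blast
  next
    case False
    moreover have "finite P" "P \<subseteq> X"
      using finite_X unfolding P_def by auto
    ultimately obtain p where p: "p \<in> P" "\<forall>w\<in>P. (w, p) \<in> L"
      using linear_order_on_finite_has_greatest[OF linear] by blast
    then have "p \<in> X" "(p, v) \<in> L" "p \<noteq> v"
      unfolding P_def by blast+
    have "E w (\<phi> p) = E w (\<phi> v)" if "w \<in> V - {v}" for w
    proof (cases "w \<in> X")
      case True
      then have "(w, p) \<in> L \<longleftrightarrow> (w, v) \<in> L"
        using p that L_trans[OF _ \<open>(p, v) \<in> L\<close>] unfolding P_def by blast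
      then show ?thesis
        using adj_\<phi> True \<open>p \<in> X\<close> assms(2) by blast
    next
      case False
      then have "w \<in> Y"
        using that Y_iff_not_X by blast
      then show ?thesis
        using no_adj_Y \<phi>_Y \<open>p \<in> X\<close> assms(2) by blast
    qed
    moreover have "\<phi> p \<in> V - {v}" "\<phi> v \<in> V - {v}"
      using \<phi>_V[OF \<open>p \<in> X\<close>] \<phi>_V[OF assms(2)] \<phi>_not_X[OF \<open>p \<in> X\<close>] \<phi>_not_X[OF assms(2)] assms(2)
      by auto
    moreover have "\<phi> p \<noteq> \<phi> v"
      using \<phi>_inj \<open>p \<in> X\<close> \<open>p \<noteq> v\<close> assms(2) by blast
    ultimately show ?thesis
      using twins_not_prime[of "\<phi> p" "V - {v}" "\<phi> v"] card(1) by blast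
  qed
qed

lemma delete_Y_not_prime:
  assumes "card V \<ge> 4" "x \<in> X"
  shows "\<not> prime_graph (V - {\<phi> x}) E"
proof -
  let ?v = "\<phi> x"
  have card: "card (V - {?v}) \<ge> 3" "finite (V - {?v})"
    using assms finite_V \<phi>_V by auto
  define S where "S = {z \<in> X. (x, z) \<in> L \<and> z \<noteq> x}"
  show ?thesis
  proof (cases "S = {}")
    case True
    have "\<not> E x w" if "w \<in> V - {?v}" for w
    proof
      assume "E x w"
      then have "w \<in> Y"
        using adj_sides[OF _ _ \<open>E x w\<close>] that assms(2) X_subset_V Y_iff_not_X by blast
      then obtain z where "z \<in> X" "w = \<phi> z"
        using Y_\<phi> by blast
      then have "(x, z) \<in> L" "z \<noteq> x"
        using adj_\<phi> assms(2) \<open>E x w\<close> that by blast+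
      then show False
        using True \<open>z \<in> X\<close> unfolding S_def by blast
    qed
    moreover have "x \<in> V - {?v}"
      using \<phi>_not_X[OF assms(2)] X_subset_V assms(2) by auto
    ultimately show ?thesis
      using isolated_not_prime[OF _ card(2,1)] by blast
  next
    case False
    moreover have "finite S" "S \<subseteq> X"
      using finite_X unfolding S_def by auto
    ultimately obtain s where s: "s \<in> S" "\<forall>w\<in>S. (s, w) \<in> L"
      using linear_order_on_finite_has_least[OF linear] by blast
    then have "s \<in> X" "(x, s) \<in> L" "s \<noteq> x"
      unfolding S_def by blast+
    have "E w x = E w s" if w: "w \<in> V - {?v}" for w
    proof (cases "w \<in> X")
      case True
      then show ?thesis
        using no_adj_X \<open>s \<in> X\<close> assms(2) by blast
    next
      case False
      then have "w \<in> Y"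
        using w Y_iff_not_X by blast
      then obtain z where "z \<in> X" "w = \<phi> z"
        using Y_\<phi> by blast
      moreover have "z \<noteq> x"
        using w calculation by blast
      ultimately have "(x, z) \<in> L \<longleftrightarrow> (s, z) \<in> L"
        using s L_trans[OF \<open>(x, s) \<in> L\<close>] unfolding S_def by blast
      then show ?thesis
        using adj_\<phi>' \<open>z \<in> X\<close> \<open>w = \<phi> z\<close> \<open>s \<in> X\<close> assms(2) by blast
    qed
    moreover have "x \<in> V - {?v}" "s \<in> V - {?v}"
      using \<phi>_not_X[OF assms(2)] X_subset_V \<open>s \<in> X\<close> assms(2) by auto
    ultimately show ?thesis
      using twins_not_prime[of x "V - {?v}" s] \<open>s \<noteq> x\<close> card(1) by blast
  qed
qed

lemma critical: "card V \<ge> 4 \<Longrightarrow> critical V E"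
  unfolding critical_def
  using prime delete_X_not_prime delete_Y_not_prime X_Un_Y Y_\<phi> by fastforce

end

theorem proposition5p1:
  fixes V :: "'a set" and E :: "'a \<Rightarrow> 'a \<Rightarrow> bool"
  assumes "graph V E" and "bipartite V E" and "card V \<ge> 4"
  shows "((\<not> induced_le P5_V P5_E V E \<and> prime_graph V E) \<longleftrightarrow> critical V E)
       \<and> (critical V E \<longleftrightarrow> half_graph V E)"
proof -
  obtain X Y where "bipartition V E X Y"
    using assms(2) unfolding bipartite_def by blast
  then interpret bipartite_graph V E X Y
    using assms(1) by unfold_locales
  have half_critical: "critical V E" if "half_graph V E"
    using half_graph_structureI[OF assms(1) that] half_graph_structure.critical assms(3) by blast
  have P5_free_prime_half: "half_graph V E"
    if "\<not> induced_le P5_V P5_E V E" "prime_graph V E"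
    using that by (intro prime_P5_free_bipartite.half_graph) unfold_locales
  show ?thesis
    using half_critical P5_free_prime_half critical_imp_P5_free unfolding critical_def by blast
qed

end
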